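(* Fix $\lambda\in[0,1)$, $N\ge1$ and $p\in(0,1]$. Let $(\mathbf{V}^{N,p}[n])_{n\ge0}$ and $(\mathbf{V}^{N,0}[n])_{n\ge0}$ be the embedded discrete-time chains of the $N$-station systems with centralization parameters $p$ and $0$, respectively. If $\mathbf{V}^{N,p}[0]=\mathbf{V}^{N,0}[0]$, then $(\mathbf{V}^{N,p}_1[n])_{n\ge0}$ is stochastically dominated by $(\mathbf{V}^{N,0}_1[n])_{n\ge0}$.
   Context: The $N$-station system with parameter $q\in[0,1]$: station $n\in\{1,\dots,N\}$ has queue length $Q_n(t)\in\mathbb{Z}_+$. Tasks arrive to each station according to independent Poisson processes of rate $\lambda$. Each station has an independent Poisson clock of rate $1-q$: at a tick, if $Q_n>0$ one task leaves station $n$, otherwise nothing happens. An independent central Poisson clock of rate $Nq$: at a tick, if $\sum_nQ_n>0$ one task leaves a station chosen uniformly at random among stations with a longest queue, otherwise nothing happens. $\mathbf{V}^{N,q}_i(t)=\sum_{j\ge i}\frac1N\sum_n\mathbb{I}\{Q_n(t)\ge j\}$. The events (arrivals and ticks of all clocks, including ticks that remove no task) form a Poisson process of total rate $N(1+\lambda)$; with $t_0=0$ and $t_n$ the time of the $n$-th event, $\mathbf{V}^{N,q}[n]=\mathbf{V}^{N,q}(t_n)$. A discrete-time process $(X[n])_{n\ge0}$ is stochastically dominated by $(Y[n])_{n\ge0}$ if there exist processes $X',Y'$ on a common probability space with the same distributions as $X,Y$ respectively and $X'[n]\le Y'[n]$ for all $n\ge0$ almost surely. *)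

theory Defs
  imports "HOL-Probability.Probability"
begin

text \<open>States of the N-station system: queue-length vectors Q, where Q n is the queue
length of station n for n < N (values at n \<ge> N are irrelevant and never touched).
Stations are indexed 0..N-1.\<close>

type_synonym qstate = "nat \<Rightarrow> nat"

definition Vvec :: "nat \<Rightarrow> qstate \<Rightarrow> nat \<Rightarrow> real" where
  "Vvec N Q i = (\<Sum>k. (1 / real N) * real (card {n. n < N \<and> i + k \<le> Q n}))"

definition longest :: "nat \<Rightarrow> qstate \<Rightarrow> nat set" where
  "longest N Q = {i. i < N \<and> Q i = Max (Q ` {..<N})}"

text \<open>One-step transition kernel of the embedded discrete-time chain (one event of the
total Poisson process of rate N(1+lam)): with prob. lam/(1+lam) an arrival at a uniformly
chosen station; with prob. (1-q)/(1+lam) a tick of a uniformly chosen station's own clock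
(one departure if nonempty); with prob. q/(1+lam) a tick of the central clock (one departure
from a uniformly chosen longest queue, if the system is nonempty).\<close>
definition step :: "nat \<Rightarrow> real \<Rightarrow> real \<Rightarrow> qstate \<Rightarrow> qstate pmf" where
  "step N lam q Q =
     do { a \<leftarrow> bernoulli_pmf (lam / (1 + lam));
          if a then map_pmf (\<lambda>i. Q(i := Q i + 1)) (pmf_of_set {..<N})
          else do { c \<leftarrow> bernoulli_pmf q;
                    if c then
                      (if (\<forall>i<N. Q i = 0) then return_pmf Q
                       else map_pmf (\<lambda>i. Q(i := Q i - 1)) (pmf_of_set (longest N Q)))
                    else map_pmf (\<lambda>i. Q(i := Q i - 1)) (pmf_of_set {..<N}) } }"

definition markov_chain ::
  "'a measure \<Rightarrow> (nat \<Rightarrow> 'a \<Rightarrow> 's) \<Rightarrow> 's pmf \<Rightarrow> ('s \<Rightarrow> 's pmf) \<Rightarrow> bool" where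
  "markov_chain M X mu K \<longleftrightarrow> prob_space M \<and>
     (\<forall>n. X n \<in> measurable M (count_space UNIV)) \<and>
     (\<forall>n (s :: nat \<Rightarrow> 's).
        measure M {\<omega> \<in> space M. \<forall>k\<le>n. X k \<omega> = s k}
        = pmf mu (s 0) * (\<Prod>k<n. pmf (K (s k)) (s (Suc k))))"

definition process_law :: "'a measure \<Rightarrow> (nat \<Rightarrow> 'a \<Rightarrow> real) \<Rightarrow> (nat \<Rightarrow> real) measure" where
  "process_law M X = distr M (PiM UNIV (\<lambda>_. borel)) (\<lambda>\<omega> n. X n \<omega>)"

text \<open>The common space is taken of type (path \<times> path), which is no loss of generality
(any coupling can be transported to the canonical one on pairs of paths).\<close>
definition stoch_dominated ::
  "'a measure \<Rightarrow> (nat \<Rightarrow> 'a \<Rightarrow> real) \<Rightarrow> 'b measure \<Rightarrow> (nat \<Rightarrow> 'b \<Rightarrow> real) \<Rightarrow> bool" where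
  "stoch_dominated M X M' Y \<longleftrightarrow>
     (\<exists>(\<Omega> :: ((nat \<Rightarrow> real) \<times> (nat \<Rightarrow> real)) measure) X' Y'.
        prob_space \<Omega> \<and>
        (\<forall>n. X' n \<in> borel_measurable \<Omega>) \<and> (\<forall>n. Y' n \<in> borel_measurable \<Omega>) \<and>
        process_law \<Omega> X' = process_law M X \<and> process_law \<Omega> Y' = process_law M' Y \<and>
        (AE \<omega> in \<Omega>. \<forall>n. X' n \<omega> \<le> Y' n \<omega>))"

end

theory Submission
  imports Defs
begin

text \<open>Both systems are driven by the same noise. An arrival, and a departure by a local clock,
  happen at the same time in both systems and at the station of the same rank (the \<open>k\<close>-th longest
  queue); a tick of the central clock removes a task from a longest queue of the centralised system
  but acts as a local departure in the other one. Writing \<open>mass_above t Q = \<Sum>\<^sub>n (Q n - t)\<^sup>+\<close>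
  for the number of tasks above level \<open>t\<close>, each coupled move preserves
  \<open>mass_above t a \<le> mass_above t b\<close> for all \<open>t\<close>, and \<open>V\<^sub>1 = mass_above 0 / N\<close>. Initial states are
  coupled so that their occupancy vectors agree, which gives the invariant at time 0. Realising
  both Markov chains as functions of one i.i.d. noise sequence turns the pathwise inequality into
  stochastic domination of the laws.\<close>

section \<open>Laws of Markov chains\<close>

fun path_pmf :: "'s pmf \<Rightarrow> ('s \<Rightarrow> 's pmf) \<Rightarrow> nat \<Rightarrow> 's list pmf" where
  "path_pmf mu K 0 = map_pmf (\<lambda>x. [x]) mu"
| "path_pmf mu K (Suc n) = bind_pmf (path_pmf mu K n) (\<lambda>l. map_pmf (\<lambda>x. l @ [x]) (K (last l)))"

lemma length_path_pmf: "l \<in> set_pmf (path_pmf mu K n) \<Longrightarrow> length l = Suc n"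
  by (induction n arbitrary: l) auto

lemma pmf_path_pmf:
  "pmf (path_pmf mu K n) l =
     (if length l = Suc n then pmf mu (l ! 0) * (\<Prod>k<n. pmf (K (l ! k)) (l ! Suc k)) else 0)"
proof (induction n arbitrary: l)
  case 0
  show ?case
  proof (cases "length l = 1")
    case True
    then obtain x where "l = [x]" by (cases l) auto
    moreover have "pmf (map_pmf (\<lambda>x. [x]) mu) [x] = pmf mu x"
      by (rule pmf_map_inj') (auto simp: inj_def)
    ultimately show ?thesis by simp
  qed (auto simp: pmf_eq_0_set_pmf)
next
  case (Suc n)
  show ?case
  proof (cases "length l = Suc (Suc n)")
    case True
    then obtain l0 x where l: "l = l0 @ [x]" and len: "length l0 = Suc n"
      by (metis length_Suc_conv_rev)
    have snoc: "pmf (map_pmf (\<lambda>y. l' @ [y]) (K (last l'))) l = (if l' = l0 then pmf (K (last l0)) x else 0)"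
      for l'
    proof (cases "l' = l0")
      case True
      have "inj (\<lambda>y. l0 @ [y])" by (auto simp: inj_def)
      then show ?thesis using l True pmf_map_inj'[of "\<lambda>y. l0 @ [y]" "K (last l0)" x] by simp
    qed (use l in \<open>auto intro!: pmf_map_outside\<close>)
    have "pmf (path_pmf mu K (Suc n)) l
        = measure_pmf.expectation (path_pmf mu K n) (\<lambda>l'. if l' = l0 then pmf (K (last l0)) x else 0)"
      by (simp add: pmf_bind snoc)
    also have "\<dots> = pmf (path_pmf mu K n) l0 * pmf (K (last l0)) x"
      by (subst integral_measure_pmf[where A="{l0}"]) (auto split: if_splits)
    also have "\<dots> = pmf mu (l ! 0) * (\<Prod>k<Suc n. pmf (K (l ! k)) (l ! Suc k))"
    proof -
      have "last l0 = l0 ! n" using len by (metis diff_Suc_1 last_conv_nth list.size(3) nat.distinct(1))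
      then show ?thesis using len l Suc.IH[of l0]
        by (simp add: nth_append lessThan_Suc mult.commute mult.left_commute)
    qed
    finally show ?thesis using True by simp
  qed (use length_path_pmf[of l mu K "Suc n"] in \<open>auto simp: pmf_eq_0_set_pmf\<close>)
qed

lemma map_upt_Suc_eq_iff: "map f [0..<Suc n] = map g [0..<Suc n] \<longleftrightarrow> (\<forall>k\<le>n. f k = g k)"
  by (simp add: map_eq_conv Ball_def less_Suc_eq_le del: upt_Suc)

lemma pmf_path_pmf_map_upt:
  "pmf (path_pmf mu K n) (map s [0..<Suc n]) = pmf mu (s 0) * (\<Prod>k<n. pmf (K (s k)) (s (Suc k)))"
  by (simp add: pmf_path_pmf nth_map_upt del: upt_Suc)

lemma markov_chain_iff_path_pmf:
  "markov_chain M X mu K \<longleftrightarrow> prob_space M \<and> (\<forall>n. X n \<in> measurable M (count_space UNIV)) \<and>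
     (\<forall>n s. measure M {\<omega> \<in> space M. \<forall>k\<le>n. X k \<omega> = s k} = pmf (path_pmf mu K n) (map s [0..<Suc n]))"
  unfolding markov_chain_def pmf_path_pmf_map_upt ..

lemma markov_chainD:
  assumes "markov_chain M X mu K"
  shows "prob_space M" and "\<And>n. X n \<in> measurable M (count_space UNIV)"
  using assms unfolding markov_chain_def by auto

lemma sets_Collect_prefix:
  fixes X :: "nat \<Rightarrow> 'a \<Rightarrow> 's"
  assumes "\<And>k. X k \<in> measurable M (count_space UNIV)"
  shows "{\<omega> \<in> space M. \<forall>k\<le>n. P k (X k \<omega>)} \<in> sets M"
proof -
  have "{\<omega> \<in> space M. \<forall>k\<in>{..n}. P k (X k \<omega>)} \<in> sets M"
  proof (rule sets.sets_Collect_finite_All')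
    fix k
    have "X k -` {x. P k x} \<inter> space M \<in> sets M"
      by (rule measurable_sets[OF assms]) simp
    moreover have "{\<omega> \<in> space M. P k (X k \<omega>)} = X k -` {x. P k x} \<inter> space M" by auto
    ultimately show "{\<omega> \<in> space M. P k (X k \<omega>)} \<in> sets M" by (simp only:)
  qed auto
  then show ?thesis by (simp only: atMost_iff Ball_def)
qed

lemma prefix_eq_iff:
  assumes "length l = Suc n"
  shows "map (\<lambda>k. X k \<omega>) [0..<Suc n] = l \<longleftrightarrow> (\<forall>k\<le>n. X k \<omega> = l ! k)"
proof -
  have "l = map ((!) l) [0..<Suc n]" using assms by (metis map_nth)
  then have "(map (\<lambda>k. X k \<omega>) [0..<Suc n] = l) \<longleftrightarrow> map (\<lambda>k. X k \<omega>) [0..<Suc n] = map ((!) l) [0..<Suc n]"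
    by (rule arg_cong[where f="\<lambda>z. map (\<lambda>k. X k \<omega>) [0..<Suc n] = z"])
  then show ?thesis unfolding map_upt_Suc_eq_iff .
qed

lemma sets_prefix_eq:
  assumes "\<And>k. X k \<in> measurable M (count_space UNIV)"
  shows "{\<omega> \<in> space M. map (\<lambda>k. X k \<omega>) [0..<Suc n] = l} \<in> sets M"
proof (cases "length l = Suc n")
  case True
  then show ?thesis using sets_Collect_prefix[OF assms] by (simp only: prefix_eq_iff)
next
  case False
  then have "{\<omega> \<in> space M. map (\<lambda>k. X k \<omega>) [0..<Suc n] = l} = {}" by (auto simp del: upt_Suc)
  then show ?thesis by (metis sets.empty_sets)
qed

text \<open>A random variable whose point masses are those of a pmf has that pmf as its law, even when
  its value type is uncountable (as for paths of queue-length vectors).\<close>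

lemma prob_le_of_point_masses:
  assumes "prob_space M" and point: "\<And>l. {\<omega> \<in> space M. h \<omega> = l} \<in> sets M"
    and pmf: "\<And>l. measure M {\<omega> \<in> space M. h \<omega> = l} = pmf P l"
    and C: "{\<omega> \<in> space M. h \<omega> \<in> C} \<in> sets M"
  shows "measure_pmf.prob P C \<le> measure M {\<omega> \<in> space M. h \<omega> \<in> C}"
proof -
  interpret prob_space M by fact
  define S where "S = C \<inter> set_pmf P"
  have "countable S" unfolding S_def by (auto intro: countable_subset)
  have "emeasure (measure_pmf P) C = (\<integral>\<^sup>+l. pmf P l \<partial>count_space S)"
    unfolding S_def by (simp add: nn_integral_pmf emeasure_Int_set_pmf)
  also have "\<dots> = (\<integral>\<^sup>+l. emeasure M {\<omega> \<in> space M. h \<omega> = l} \<partial>count_space S)"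
    using pmf by (simp add: emeasure_eq_measure)
  also have "\<dots> = emeasure M (\<Union>l\<in>S. {\<omega> \<in> space M. h \<omega> = l})"
    using \<open>countable S\<close> point
    by (intro emeasure_UN_countable[symmetric]) (auto simp: disjoint_family_on_def)
  also have "\<dots> \<le> emeasure M {\<omega> \<in> space M. h \<omega> \<in> C}"
    using C by (intro emeasure_mono) (auto simp: S_def)
  finally show ?thesis
    by (simp add: emeasure_eq_measure measure_pmf.emeasure_eq_measure)
qed

lemma prob_eq_of_point_masses:
  assumes M: "prob_space M" and point: "\<And>l. {\<omega> \<in> space M. h \<omega> = l} \<in> sets M"
    and pmf: "\<And>l. measure M {\<omega> \<in> space M. h \<omega> = l} = pmf P l"
    and C: "{\<omega> \<in> space M. h \<omega> \<in> C} \<in> sets M"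
  shows "measure M {\<omega> \<in> space M. h \<omega> \<in> C} = measure_pmf.prob P C"
proof -
  interpret prob_space M by fact
  have compl: "{\<omega> \<in> space M. h \<omega> \<in> -C} = space M - {\<omega> \<in> space M. h \<omega> \<in> C}" by auto
  have "{\<omega> \<in> space M. h \<omega> \<in> -C} \<in> sets M"
    unfolding compl by (rule sets.Diff[OF sets.top C])
  then have "measure_pmf.prob P (-C) \<le> measure M {\<omega> \<in> space M. h \<omega> \<in> -C}"
    by (rule prob_le_of_point_masses[OF M point pmf])
  moreover have "measure M {\<omega> \<in> space M. h \<omega> \<in> -C} = 1 - measure M {\<omega> \<in> space M. h \<omega> \<in> C}"
    using prob_compl[OF C] by (simp only: compl)
  moreover have "measure_pmf.prob P (-C) = 1 - measure_pmf.prob P C"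
    using measure_pmf.prob_compl[of C P] by (simp add: Compl_eq_Diff_UNIV)
  moreover have "measure_pmf.prob P C \<le> measure M {\<omega> \<in> space M. h \<omega> \<in> C}"
    by (rule prob_le_of_point_masses[OF M point pmf C])
  ultimately show ?thesis by linarith
qed

lemma markov_chain_prefix_prob:
  assumes mc: "markov_chain M X mu K"
    and B: "{\<omega> \<in> space M. map (\<lambda>k. X k \<omega>) [0..<Suc n] \<in> B} \<in> sets M"
  shows "measure M {\<omega> \<in> space M. map (\<lambda>k. X k \<omega>) [0..<Suc n] \<in> B} = measure_pmf.prob (path_pmf mu K n) B"
proof (rule prob_eq_of_point_masses[OF markov_chainD(1)[OF mc] _ _ B])
  show "{\<omega> \<in> space M. map (\<lambda>k. X k \<omega>) [0..<Suc n] = l} \<in> sets M" for l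
    using sets_prefix_eq markov_chainD(2)[OF mc] by blast
  show "measure M {\<omega> \<in> space M. map (\<lambda>k. X k \<omega>) [0..<Suc n] = l} = pmf (path_pmf mu K n) l" for l
  proof (cases "length l = Suc n")
    case True
    then have "l = map (\<lambda>k. l ! k) [0..<Suc n]"
      by (simp add: list_eq_iff_nth_eq del: upt_Suc)
    moreover have "measure M {\<omega> \<in> space M. \<forall>k\<le>n. X k \<omega> = l ! k}
        = pmf (path_pmf mu K n) (map (\<lambda>k. l ! k) [0..<Suc n])"
      using mc unfolding markov_chain_iff_path_pmf by blast
    ultimately show ?thesis using True by (simp add: prefix_eq_iff del: upt_Suc)
  next
    case False
    then have "{\<omega> \<in> space M. map (\<lambda>k. X k \<omega>) [0..<Suc n] = l} = {}" by auto
    then show ?thesis using False by (simp only:) (simp add: pmf_path_pmf)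
  qed
qed

lemma measurable_process:
  fixes f :: "'s \<Rightarrow> real"
  assumes "\<And>k. A k \<in> measurable M (count_space UNIV)"
  shows "(\<lambda>\<omega> n. f (A n \<omega>)) \<in> measurable M (PiM UNIV (\<lambda>_. borel))"
proof (rule measurable_PiM_single')
  show "(\<lambda>\<omega>. f (A i \<omega>)) \<in> borel_measurable M" for i
    by (rule measurable_compose[OF assms]) (simp add: measurable_count_space_eq1)
qed (simp add: space_PiM)

lemma emeasure_process_law_cylinder:
  fixes f :: "'s \<Rightarrow> real"
  assumes mc: "markov_chain M X mu K" and J: "J \<subseteq> {..n}" and F: "\<And>j. j \<in> J \<Longrightarrow> F j \<in> sets borel"
  shows "emeasure (process_law M (\<lambda>n \<omega>. f (X n \<omega>))) (prod_emb UNIV (\<lambda>_. borel) J (PiE J F))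
     = measure_pmf.prob (path_pmf mu K n) {l. \<forall>j\<in>J. f (l ! j) \<in> F j}"
proof -
  interpret prob_space M using markov_chainD(1)[OF mc] .
  have meas: "(\<lambda>\<omega> n. f (X n \<omega>)) \<in> measurable M (PiM UNIV (\<lambda>_. borel))"
    using measurable_process markov_chainD(2)[OF mc] .
  have cyl: "prod_emb UNIV (\<lambda>_. borel) J (PiE J F) \<in> sets (PiM UNIV (\<lambda>_. borel))"
    using F J finite_subset[OF J] by (auto intro!: sets_PiM_I)
  have pre: "(\<lambda>\<omega> n. f (X n \<omega>)) -` prod_emb UNIV (\<lambda>_. borel) J (PiE J F) \<inter> space M
     = {\<omega> \<in> space M. map (\<lambda>k. X k \<omega>) [0..<Suc n] \<in> {l. \<forall>j\<in>J. f (l ! j) \<in> F j}}"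
  proof -
    have "map (\<lambda>k. X k \<omega>) [0..<Suc n] ! j = X j \<omega>" if "j \<in> J" for \<omega> j
      using that J by (auto simp del: upt_Suc simp: less_Suc_eq_le)
    then show ?thesis by (auto simp: prod_emb_iff PiE_iff)
  qed
  have ev: "{\<omega> \<in> space M. map (\<lambda>k. X k \<omega>) [0..<Suc n] \<in> {l. \<forall>j\<in>J. f (l ! j) \<in> F j}} \<in> sets M"
    using measurable_sets[OF meas cyl] pre by simp
  show ?thesis
    unfolding process_law_def emeasure_distr[OF meas cyl] pre emeasure_eq_measure
      markov_chain_prefix_prob[OF mc ev] measure_pmf.emeasure_eq_measure ..
qed

lemma process_law_markov_chain_eq:
  fixes f :: "'s \<Rightarrow> real"
  assumes mc1: "markov_chain M1 X mu K" and mc2: "markov_chain M2 Y mu K"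
  shows "process_law M1 (\<lambda>n \<omega>. f (X n \<omega>)) = process_law M2 (\<lambda>n \<omega>. f (Y n \<omega>))"
proof (rule measure_eqI_PiM_infinite)
  interpret prob_space M1 using markov_chainD(1)[OF mc1] .
  have "prob_space (process_law M1 (\<lambda>n \<omega>. f (X n \<omega>)))"
    unfolding process_law_def
    by (rule prob_space_distr, rule measurable_process, rule markov_chainD(2)[OF mc1])
  then show "finite_measure (process_law M1 (\<lambda>n \<omega>. f (X n \<omega>)))"
    by (simp add: prob_space_def)
  fix F :: "nat \<Rightarrow> real set" and J :: "nat set"
  assume "finite J" and F: "\<And>i. i \<in> J \<Longrightarrow> F i \<in> sets borel"
  then obtain n where J: "J \<subseteq> {..n}" using finite_nat_iff_bounded_le by auto
  show "emeasure (process_law M1 (\<lambda>n \<omega>. f (X n \<omega>))) (prod_emb UNIV (\<lambda>_. borel) J (PiE J F))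
     = emeasure (process_law M2 (\<lambda>n \<omega>. f (Y n \<omega>))) (prod_emb UNIV (\<lambda>_. borel) J (PiE J F))"
    using emeasure_process_law_cylinder[where F=F, OF mc1 J F] emeasure_process_law_cylinder[where F=F, OF mc2 J F]
    by simp
qed (simp_all add: process_law_def)

section \<open>Markov chains driven by independent noise\<close>

primrec driven_state :: "('x \<Rightarrow> 'z) \<Rightarrow> ('z \<Rightarrow> 'x \<Rightarrow> 'z) \<Rightarrow> (nat \<Rightarrow> 'x) \<Rightarrow> nat \<Rightarrow> 'z" where
  "driven_state G F \<omega> 0 = G (\<omega> 0)"
| "driven_state G F \<omega> (Suc n) = F (driven_state G F \<omega> n) (\<omega> (Suc n))"

lemma driven_state_cong: "(\<And>i. i \<le> n \<Longrightarrow> \<omega> i = \<omega>' i) \<Longrightarrow> driven_state G F \<omega> n = driven_state G F \<omega>' n"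
  by (induction n) auto

definition driven_states :: "('x \<Rightarrow> 'z) \<Rightarrow> ('z \<Rightarrow> 'x \<Rightarrow> 'z) \<Rightarrow> 'x list \<Rightarrow> 'z list" where
  "driven_states G F l = map (driven_state G F ((!) l)) [0..<length l]"

lemma driven_states_singleton: "driven_states G F [x] = [G x]"
  by (simp add: driven_states_def)

lemma driven_states_snoc:
  assumes "l \<noteq> []"
  shows "driven_states G F (l @ [x]) = driven_states G F l @ [F (last (driven_states G F l)) x]"
proof -
  obtain m where m: "length l = Suc m" using assms by (cases l) auto
  have prefix: "driven_state G F ((!) (l @ [x])) k = driven_state G F ((!) l) k" if "k \<le> m" for k
    using that m by (intro driven_state_cong) (auto simp: nth_append)
  have "(l @ [x]) ! Suc m = x" using m nth_append_length[of l x] by simp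
  then have "driven_state G F ((!) (l @ [x])) (Suc m) = F (driven_state G F ((!) l) m) x"
    using prefix[of m] by simp
  moreover have "last (driven_states G F l) = driven_state G F ((!) l) m"
    using m by (simp add: driven_states_def)
  ultimately show ?thesis
    using m prefix by (simp add: driven_states_def)
qed

lemma driven_states_prefix: "driven_states G F (map \<omega> [0..<Suc n]) = map (driven_state G F \<omega>) [0..<Suc n]"
  unfolding driven_states_def length_map length_upt diff_zero map_upt_Suc_eq_iff
  by (intro allI impI driven_state_cong) (simp add: nth_map_upt less_Suc_eq_le del: upt_Suc)

lemma map_driven_states_path_pmf:
  "map_pmf (driven_states G F) (path_pmf xi (\<lambda>_. xi) n) = path_pmf (map_pmf G xi) (\<lambda>z. map_pmf (F z) xi) n"
proof (induction n)
  case 0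
  then show ?case by (simp add: map_pmf_comp driven_states_singleton)
next
  case (Suc n)
  have "map_pmf (driven_states G F) (path_pmf xi (\<lambda>_. xi) (Suc n))
      = bind_pmf (path_pmf xi (\<lambda>_. xi) n) (\<lambda>l. map_pmf (\<lambda>x. driven_states G F (l @ [x])) xi)"
    by (simp add: map_bind_pmf map_pmf_comp)
  also have "\<dots> = bind_pmf (path_pmf xi (\<lambda>_. xi) n)
      (\<lambda>l. map_pmf (\<lambda>y. driven_states G F l @ [y]) (map_pmf (F (last (driven_states G F l))) xi))"
  proof (rule bind_pmf_cong[OF refl])
    fix l assume "l \<in> set_pmf (path_pmf xi (\<lambda>_. xi) n)"
    then have "l \<noteq> []" using length_path_pmf by fastforce
    then show "map_pmf (\<lambda>x. driven_states G F (l @ [x])) xi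
        = map_pmf (\<lambda>y. driven_states G F l @ [y]) (map_pmf (F (last (driven_states G F l))) xi)"
      by (simp add: driven_states_snoc map_pmf_comp)
  qed
  also have "\<dots> = path_pmf (map_pmf G xi) (\<lambda>z. map_pmf (F z) xi) (Suc n)"
    by (simp add: bind_map_pmf flip: Suc)
  finally show ?case .
qed

lemma map_path_pmf:
  assumes "map_pmf f mu' = mu" and "\<And>z. map_pmf f (K' z) = K (f z)"
  shows "map_pmf (map f) (path_pmf mu' K' n) = path_pmf mu K n"
proof (induction n)
  case 0
  then show ?case by (simp add: map_pmf_comp flip: assms(1))
next
  case (Suc n)
  have "map_pmf (map f) (path_pmf mu' K' (Suc n))
      = bind_pmf (path_pmf mu' K' n) (\<lambda>l. map_pmf (\<lambda>y. map f l @ [y]) (map_pmf f (K' (last l))))"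
    by (simp add: map_bind_pmf map_pmf_comp)
  also have "\<dots> = bind_pmf (path_pmf mu' K' n) (\<lambda>l. map_pmf (\<lambda>y. map f l @ [y]) (K (last (map f l))))"
  proof (rule bind_pmf_cong[OF refl])
    fix l assume "l \<in> set_pmf (path_pmf mu' K' n)"
    then have "l \<noteq> []" using length_path_pmf by fastforce
    then show "map_pmf (\<lambda>y. map f l @ [y]) (map_pmf f (K' (last l)))
        = map_pmf (\<lambda>y. map f l @ [y]) (K (last (map f l)))"
      by (simp add: assms(2) last_map)
  qed
  also have "\<dots> = path_pmf mu K (Suc n)"
    by (simp add: bind_map_pmf flip: Suc)
  finally show ?case .
qed

lemma markov_chain_lump:
  assumes mc: "markov_chain M W mu' K'"
    and init: "map_pmf \<phi> mu' = mu" and kernel: "\<And>z. map_pmf \<phi> (K' z) = K (\<phi> z)"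
  shows "markov_chain M (\<lambda>n \<omega>. \<phi> (W n \<omega>)) mu K"
  unfolding markov_chain_iff_path_pmf
proof (intro conjI allI)
  show "prob_space M" using markov_chainD(1)[OF mc] .
  show "(\<lambda>\<omega>. \<phi> (W n \<omega>)) \<in> measurable M (count_space UNIV)" for n
    by (rule measurable_compose[OF markov_chainD(2)[OF mc]]) simp
  fix n s
  have ev: "{\<omega> \<in> space M. \<forall>k\<le>n. \<phi> (W k \<omega>) = s k}
      = {\<omega> \<in> space M. map (\<lambda>k. W k \<omega>) [0..<Suc n] \<in> map \<phi> -` {map s [0..<Suc n]}}"
    by (simp only: vimage_singleton_eq map_map comp_def map_upt_Suc_eq_iff)
  have "{\<omega> \<in> space M. \<forall>k\<le>n. \<phi> (W k \<omega>) = s k} \<in> sets M"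
    by (rule sets_Collect_prefix[OF markov_chainD(2)[OF mc]])
  then have "measure M {\<omega> \<in> space M. \<forall>k\<le>n. \<phi> (W k \<omega>) = s k}
      = measure_pmf.prob (path_pmf mu' K' n) (map \<phi> -` {map s [0..<Suc n]})"
    unfolding ev by (rule markov_chain_prefix_prob[OF mc])
  also have "\<dots> = pmf (path_pmf mu K n) (map s [0..<Suc n])"
    by (simp add: pmf_map map_path_pmf[where f=\<phi> and K=K, OF init kernel, symmetric] del: upt_Suc)
  finally show "measure M {\<omega> \<in> space M. \<forall>k\<le>n. \<phi> (W k \<omega>) = s k} = pmf (path_pmf mu K n) (map s [0..<Suc n])" .
qed

lemma measurable_prefix:
  fixes X :: "nat \<Rightarrow> 'a \<Rightarrow> 's::countable"
  assumes "\<And>k. X k \<in> measurable M (count_space UNIV)"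
  shows "(\<lambda>\<omega>. map (\<lambda>k. X k \<omega>) [0..<Suc n]) \<in> measurable M (count_space UNIV)"
  unfolding measurable_count_space_eq2_countable
proof (intro conjI ballI)
  fix l
  have "(\<lambda>\<omega>. map (\<lambda>k. X k \<omega>) [0..<Suc n]) -` {l} \<inter> space M = {\<omega> \<in> space M. map (\<lambda>k. X k \<omega>) [0..<Suc n] = l}"
    by blast
  then show "(\<lambda>\<omega>. map (\<lambda>k. X k \<omega>) [0..<Suc n]) -` {l} \<inter> space M \<in> sets M"
    using sets_prefix_eq[OF assms] by (simp only:)
qed simp

lemma sets_Collect_prefix_mem:
  fixes X :: "nat \<Rightarrow> 'a \<Rightarrow> 's::countable"
  assumes "\<And>k. X k \<in> measurable M (count_space UNIV)"
  shows "{\<omega> \<in> space M. map (\<lambda>k. X k \<omega>) [0..<Suc n] \<in> B} \<in> sets M"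
proof -
  have "(\<lambda>\<omega>. map (\<lambda>k. X k \<omega>) [0..<Suc n]) -` B \<inter> space M \<in> sets M"
    by (rule measurable_sets[OF measurable_prefix[OF assms]]) simp
  moreover have "(\<lambda>\<omega>. map (\<lambda>k. X k \<omega>) [0..<Suc n]) -` B \<inter> space M
      = {\<omega> \<in> space M. map (\<lambda>k. X k \<omega>) [0..<Suc n] \<in> B}"
    by blast
  ultimately show ?thesis by (simp only:)
qed

lemma markov_chain_iid: "markov_chain (PiM UNIV (\<lambda>_. measure_pmf xi)) (\<lambda>n \<omega>. \<omega> n) xi (\<lambda>_. xi)"
  unfolding markov_chain_def
proof (intro conjI allI)
  let ?O = "PiM (UNIV :: nat set) (\<lambda>_. measure_pmf xi)"
  interpret product_prob_space "\<lambda>_. measure_pmf xi" UNIV by unfold_locales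
  show "prob_space ?O" by (rule prob_space_PiM) (simp add: prob_space_measure_pmf)
  show "(\<lambda>\<omega>. \<omega> n) \<in> measurable ?O (count_space UNIV)" for n :: nat
  proof -
    have "(\<lambda>\<omega>. \<omega> n) \<in> measurable ?O (measure_pmf xi)"
      by (rule measurable_component_singleton) simp
    then show ?thesis
      using measurable_cong_sets[OF refl, of "measure_pmf xi" "count_space UNIV" ?O] by simp
  qed
  fix n s
  have "emeasure ?O {\<omega> \<in> space ?O. \<forall>k\<in>{..n}. \<omega> k \<in> {s k}} = (\<Prod>k\<in>{..n}. emeasure (measure_pmf xi) {s k})"
    by (rule emeasure_PiM_Collect) auto
  moreover have "{\<omega> \<in> space ?O. \<forall>k\<le>n. \<omega> k = s k} = {\<omega> \<in> space ?O. \<forall>k\<in>{..n}. \<omega> k \<in> {s k}}"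
    by (simp only: atMost_iff Ball_def singleton_iff)
  ultimately have "emeasure ?O {\<omega> \<in> space ?O. \<forall>k\<le>n. \<omega> k = s k} = (\<Prod>k\<in>{..n}. emeasure (measure_pmf xi) {s k})"
    by (simp only:)
  also have "\<dots> = ennreal (\<Prod>k\<in>{..n}. pmf xi (s k))"
    by (simp add: emeasure_pmf_single prod_ennreal)
  finally have "measure ?O {\<omega> \<in> space ?O. \<forall>k\<le>n. \<omega> k = s k} = enn2real (ennreal (\<Prod>k\<in>{..n}. pmf xi (s k)))"
    by (simp only: measure_def)
  also have "\<dots> = (\<Prod>k\<in>{..n}. pmf xi (s k))"
    by (simp add: prod_nonneg)
  also have "\<dots> = pmf xi (s 0) * (\<Prod>k<n. pmf xi (s (Suc k)))"
    by (subst lessThan_Suc_atMost[symmetric], subst prod.lessThan_Suc_shift) simp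
  finally show "measure ?O {\<omega> \<in> space ?O. \<forall>k\<le>n. \<omega> k = s k} = pmf xi (s 0) * (\<Prod>k<n. pmf xi (s (Suc k)))" .
qed

lemma markov_chain_driven_state:
  fixes xi :: "'x::countable pmf"
  shows "markov_chain (PiM UNIV (\<lambda>_. measure_pmf xi)) (\<lambda>n \<omega>. driven_state G F \<omega> n) (map_pmf G xi) (\<lambda>z. map_pmf (F z) xi)"
  unfolding markov_chain_iff_path_pmf
proof (intro conjI allI)
  let ?O = "PiM (UNIV :: nat set) (\<lambda>_. measure_pmf xi)"
  note iid = markov_chain_iid[of xi]
  show "prob_space ?O" by (rule prob_space_PiM) (simp add: prob_space_measure_pmf)
  have prefix: "(\<lambda>\<omega>. map \<omega> [0..<Suc n]) \<in> measurable ?O (count_space UNIV)" for n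
    using measurable_prefix[OF markov_chainD(2)[OF iid]] by simp
  show "(\<lambda>\<omega>. driven_state G F \<omega> n) \<in> measurable ?O (count_space UNIV)" for n
  proof -
    have "(\<lambda>\<omega>. driven_state G F ((!) (map \<omega> [0..<Suc n])) n) \<in> measurable ?O (count_space UNIV)"
      by (rule measurable_compose[OF prefix]) simp
    moreover have "driven_state G F ((!) (map \<omega> [0..<Suc n])) n = driven_state G F \<omega> n" for \<omega>
      by (rule driven_state_cong) (simp add: nth_map_upt del: upt_Suc)
    ultimately show ?thesis by simp
  qed
  fix n s
  have ev: "{\<omega> \<in> space ?O. \<forall>k\<le>n. driven_state G F \<omega> k = s k}
      = {\<omega> \<in> space ?O. map (\<lambda>k. \<omega> k) [0..<Suc n] \<in> driven_states G F -` {map s [0..<Suc n]}}"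
    by (simp only: vimage_singleton_eq driven_states_prefix map_upt_Suc_eq_iff)
  have "{\<omega> \<in> space ?O. map (\<lambda>k. \<omega> k) [0..<Suc n] \<in> driven_states G F -` {map s [0..<Suc n]}} \<in> sets ?O"
    by (rule sets_Collect_prefix_mem[OF markov_chainD(2)[OF iid]])
  then have "measure ?O {\<omega> \<in> space ?O. \<forall>k\<le>n. driven_state G F \<omega> k = s k}
      = measure_pmf.prob (path_pmf xi (\<lambda>_. xi) n) (driven_states G F -` {map s [0..<Suc n]})"
    unfolding ev by (rule markov_chain_prefix_prob[OF iid])
  also have "\<dots> = pmf (path_pmf (map_pmf G xi) (\<lambda>z. map_pmf (F z) xi) n) (map s [0..<Suc n])"
    by (simp add: pmf_map map_driven_states_path_pmf[symmetric] del: upt_Suc)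
  finally show "measure ?O {\<omega> \<in> space ?O. \<forall>k\<le>n. driven_state G F \<omega> k = s k}
      = pmf (path_pmf (map_pmf G xi) (\<lambda>z. map_pmf (F z) xi) n) (map s [0..<Suc n])" .
qed

lemma stoch_dominatedI:
  fixes A B :: "nat \<Rightarrow> 'c \<Rightarrow> real"
  assumes C: "prob_space C" and A: "\<And>n. A n \<in> borel_measurable C" and B: "\<And>n. B n \<in> borel_measurable C"
    and law_A: "process_law C A = process_law M X" and law_B: "process_law C B = process_law M' Y"
    and le: "AE \<omega> in C. \<forall>n. A n \<omega> \<le> B n \<omega>"
  shows "stoch_dominated M X M' Y"
proof -
  let ?P = "PiM (UNIV :: nat set) (\<lambda>_. borel :: real measure)"
  have path_A: "(\<lambda>\<omega> n. A n \<omega>) \<in> measurable C ?P" and path_B: "(\<lambda>\<omega> n. B n \<omega>) \<in> measurable C ?P"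
    using A B by (auto intro!: measurable_PiM_single' simp: space_PiM)
  have paths: "(\<lambda>\<omega>. (\<lambda>n. A n \<omega>, \<lambda>n. B n \<omega>)) \<in> measurable C (?P \<Otimes>\<^sub>M ?P)"
    using path_A path_B by (rule measurable_Pair)
  define \<Omega> where "\<Omega> = distr C (?P \<Otimes>\<^sub>M ?P) (\<lambda>\<omega>. (\<lambda>n. A n \<omega>, \<lambda>n. B n \<omega>))"
  have sets_\<Omega>: "sets \<Omega> = sets (?P \<Otimes>\<^sub>M ?P)" unfolding \<Omega>_def by simp
  have coord: "(\<lambda>\<omega>. fst \<omega> n) \<in> borel_measurable (?P \<Otimes>\<^sub>M ?P)" "(\<lambda>\<omega>. snd \<omega> n) \<in> borel_measurable (?P \<Otimes>\<^sub>M ?P)" for n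
    by measurable
  then have "(\<lambda>\<omega>. fst \<omega> n) \<in> borel_measurable \<Omega>" "(\<lambda>\<omega>. snd \<omega> n) \<in> borel_measurable \<Omega>" for n
    unfolding measurable_cong_sets[OF sets_\<Omega> refl] .
  moreover have "process_law \<Omega> (\<lambda>n \<omega>. fst \<omega> n) = process_law M X"
    using distr_distr[OF measurable_fst paths] law_A by (simp add: process_law_def \<Omega>_def comp_def)
  moreover have "process_law \<Omega> (\<lambda>n \<omega>. snd \<omega> n) = process_law M' Y"
    using distr_distr[OF measurable_snd paths] law_B by (simp add: process_law_def \<Omega>_def comp_def)
  moreover have "AE \<omega> in \<Omega>. \<forall>n. fst \<omega> n \<le> snd \<omega> n"
  proof -
    have "{\<omega> \<in> space (?P \<Otimes>\<^sub>M ?P). \<forall>n. fst \<omega> n \<le> snd \<omega> n} \<in> sets (?P \<Otimes>\<^sub>M ?P)"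
      using coord by (intro sets.sets_Collect_countable_All borel_measurable_le)
    then show ?thesis unfolding \<Omega>_def using le by (simp add: AE_distr_iff[OF paths])
  qed
  ultimately show ?thesis
    unfolding stoch_dominated_def using prob_space.prob_space_distr[OF C paths, folded \<Omega>_def]
    by (intro exI[where x=\<Omega>] exI[where x="\<lambda>n \<omega>. fst \<omega> n"] exI[where x="\<lambda>n \<omega>. snd \<omega> n"]) blast
qed

lemma coupling_with_equal_image:
  assumes "map_pmf f p = map_pmf f q"
  obtains nu where "map_pmf fst nu = p" and "map_pmf snd nu = q"
    and "\<And>a b. (a, b) \<in> set_pmf nu \<Longrightarrow> f a = f b"
proof
  define nu where "nu = bind_pmf (map_pmf f p) (\<lambda>v. pair_pmf (cond_pmf p {x. f x = v}) (cond_pmf q {x. f x = v}))"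
  have cancel: "bind_pmf (map_pmf f r) (\<lambda>v. cond_pmf r {x. f x = v}) = r" for r
    by (rule bind_cond_pmf_cancel) (auto simp: measure_map_pmf vimage_def)
  show "map_pmf fst nu = p"
    unfolding nu_def map_bind_pmf map_fst_pair_pmf by (rule cancel)
  show "map_pmf snd nu = q"
    unfolding nu_def map_bind_pmf map_snd_pair_pmf assms by (rule cancel)
  fix a b assume "(a, b) \<in> set_pmf nu"
  then obtain v where v: "v \<in> set_pmf (map_pmf f p)"
    and ab: "(a, b) \<in> set_pmf (pair_pmf (cond_pmf p {x. f x = v}) (cond_pmf q {x. f x = v}))"
    unfolding nu_def by auto
  have "v \<in> set_pmf (map_pmf f q)" using v by (simp only: assms)
  with v have "set_pmf p \<inter> {x. f x = v} \<noteq> {}" "set_pmf q \<inter> {x. f x = v} \<noteq> {}"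
    by auto
  with ab show "f a = f b" by (auto simp: set_cond_pmf)
qed

text \<open>The initial pair is drawn from \<open>nu\<close> through a countable index carried by the noise at
  time 0, so that the pair process is driven by i.i.d. noise of countable type.\<close>

lemma coupled_markov_chains:
  fixes nu :: "('s \<times> 't) pmf" and xi :: "'x::countable pmf"
  assumes kernel_X: "\<And>a. map_pmf (Fx a) xi = Kx a" and kernel_Y: "\<And>b. map_pmf (Fy b) xi = Ky b"
    and init: "\<And>a b. (a, b) \<in> set_pmf nu \<Longrightarrow> R a b"
    and step: "\<And>a b x. R a b \<Longrightarrow> R (Fx a x) (Fy b x)"
  obtains \<Omega> :: "(nat \<Rightarrow> nat \<times> 'x) measure" and A B
  where "markov_chain \<Omega> A (map_pmf fst nu) Kx" and "markov_chain \<Omega> B (map_pmf snd nu) Ky"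
    and "\<And>n \<omega>. R (A n \<omega>) (B n \<omega>)"
proof -
  define S where "S = set_pmf nu"
  define zeta where "zeta = pair_pmf (map_pmf (to_nat_on S) nu) xi"
  define G :: "nat \<times> 'x \<Rightarrow> 's \<times> 't" where "G y = from_nat_into S (fst y)" for y
  define F where "F z y = (Fx (fst z) (snd y), Fy (snd z) (snd y))" for z and y :: "nat \<times> 'x"
  let ?W = "\<lambda>n \<omega>. driven_state G F \<omega> n"
  have W: "markov_chain (PiM UNIV (\<lambda>_. measure_pmf zeta)) ?W (map_pmf G zeta) (\<lambda>z. map_pmf (F z) zeta)"
    by (rule markov_chain_driven_state)
  have "map_pmf G zeta = map_pmf (\<lambda>z. from_nat_into S (to_nat_on S z)) nu"
    unfolding zeta_def G_def map_pmf_comp[symmetric] map_fst_pair_pmf by (simp add: map_pmf_comp)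
  also have "\<dots> = nu"
    by (rule map_pmf_idI) (simp add: S_def)
  finally have G_nu: "map_pmf G zeta = nu" .
  have "map_pmf fst (map_pmf (F z) zeta) = map_pmf (Fx (fst z)) (map_pmf snd zeta)"
    and "map_pmf snd (map_pmf (F z) zeta) = map_pmf (Fy (snd z)) (map_pmf snd zeta)" for z
    by (simp_all add: map_pmf_comp F_def)
  then have kernel: "map_pmf fst (map_pmf (F z) zeta) = Kx (fst z)"
    "map_pmf snd (map_pmf (F z) zeta) = Ky (snd z)" for z
    by (simp_all add: zeta_def kernel_X kernel_Y map_snd_pair_pmf)
  have R: "R (fst (?W n \<omega>)) (snd (?W n \<omega>))" for n \<omega>
  proof (induction n)
    case 0
    have "S \<noteq> {}" unfolding S_def by (rule set_pmf_not_empty)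
    then have "G (\<omega> 0) \<in> set_pmf nu" unfolding G_def S_def by (rule from_nat_into)
    then show ?case by (simp add: init)
  next
    case (Suc n)
    then show ?case by (simp add: F_def step)
  qed
  show ?thesis
  proof
    show "markov_chain (PiM UNIV (\<lambda>_. measure_pmf zeta)) (\<lambda>n \<omega>. fst (?W n \<omega>)) (map_pmf fst nu) Kx"
      using W by (rule markov_chain_lump) (simp_all add: G_nu kernel)
    show "markov_chain (PiM UNIV (\<lambda>_. measure_pmf zeta)) (\<lambda>n \<omega>. snd (?W n \<omega>)) (map_pmf snd nu) Ky"
      using W by (rule markov_chain_lump) (simp_all add: G_nu kernel)
  qed (rule R)
qed

lemma stoch_dominated_coupling:
  fixes nu :: "('s \<times> 't) pmf" and xi :: "'x::countable pmf"
    and f :: "'s \<Rightarrow> real" and g :: "'t \<Rightarrow> real"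
  assumes X: "markov_chain M X (map_pmf fst nu) Kx" and Y: "markov_chain M' Y (map_pmf snd nu) Ky"
    and kernel_X: "\<And>a. map_pmf (Fx a) xi = Kx a" and kernel_Y: "\<And>b. map_pmf (Fy b) xi = Ky b"
    and init: "\<And>a b. (a, b) \<in> set_pmf nu \<Longrightarrow> R a b"
    and step: "\<And>a b x. R a b \<Longrightarrow> R (Fx a x) (Fy b x)"
    and mono: "\<And>a b. R a b \<Longrightarrow> f a \<le> g b"
  shows "stoch_dominated M (\<lambda>n \<omega>. f (X n \<omega>)) M' (\<lambda>n \<omega>. g (Y n \<omega>))"
proof -
  obtain \<Omega> :: "(nat \<Rightarrow> nat \<times> 'x) measure" and A B
    where A: "markov_chain \<Omega> A (map_pmf fst nu) Kx" and B: "markov_chain \<Omega> B (map_pmf snd nu) Ky"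
    and R: "\<And>n \<omega>. R (A n \<omega>) (B n \<omega>)"
    using coupled_markov_chains[where Fx=Fx and Fy=Fy and R=R and nu=nu, OF kernel_X kernel_Y init step]
    by metis
  show ?thesis
  proof (rule stoch_dominatedI)
    show "prob_space \<Omega>" by (rule markov_chainD(1)[OF A])
    show "(\<lambda>\<omega>. f (A n \<omega>)) \<in> borel_measurable \<Omega>" and "(\<lambda>\<omega>. g (B n \<omega>)) \<in> borel_measurable \<Omega>" for n
      by (rule measurable_compose[OF markov_chainD(2)[OF A]] measurable_compose[OF markov_chainD(2)[OF B]];
          simp)+
    show "process_law \<Omega> (\<lambda>n \<omega>. f (A n \<omega>)) = process_law M (\<lambda>n \<omega>. f (X n \<omega>))"
      by (rule process_law_markov_chain_eq[OF A X])
    show "process_law \<Omega> (\<lambda>n \<omega>. g (B n \<omega>)) = process_law M' (\<lambda>n \<omega>. g (Y n \<omega>))"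
      by (rule process_law_markov_chain_eq[OF B Y])
    show "AE \<omega> in \<Omega>. \<forall>n. f (A n \<omega>) \<le> g (B n \<omega>)"
      using R mono by simp
  qed
qed

section \<open>Tail masses of queue-length vectors\<close>

definition mass_above :: "nat \<Rightarrow> nat \<Rightarrow> qstate \<Rightarrow> nat" where
  "mass_above N t Q = (\<Sum>n<N. Q n - t)"

definition rank_station :: "nat \<Rightarrow> qstate \<Rightarrow> nat \<Rightarrow> nat" where
  "rank_station N Q k = rev (sort_key Q [0..<N]) ! k"

lemma bij_betw_rank_station: "bij_betw (rank_station N Q) {..<N} {..<N}"
  unfolding rank_station_def[abs_def] by (rule bij_betw_nth) auto

lemma rank_station_lt: "k < N \<Longrightarrow> rank_station N Q k < N"
  using bij_betw_rank_station[of N Q] by (auto dest: bij_betwE)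

lemma rank_station_antimono:
  assumes "i \<le> j" and "j < N"
  shows "Q (rank_station N Q j) \<le> Q (rank_station N Q i)"
proof -
  let ?xs = "sort_key Q [0..<N]"
  have "map Q ?xs ! (N - Suc j) \<le> map Q ?xs ! (N - Suc i)"
    using assms by (intro sorted_nth_mono) auto
  then show ?thesis using assms by (simp add: rank_station_def rev_nth)
qed

lemma card_above_ge_rank:
  assumes "k < N" and "t \<le> Q (rank_station N Q k)"
  shows "Suc k \<le> card {n. n < N \<and> t \<le> Q n}"
proof -
  have "rank_station N Q ` {..k} \<subseteq> {n. n < N \<and> t \<le> Q n}"
    using assms rank_station_antimono[of _ k N Q] rank_station_lt[of _ N Q]
    by (fastforce intro: order.trans)
  then have "card (rank_station N Q ` {..k}) \<le> card {n. n < N \<and> t \<le> Q n}"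
    by (intro card_mono) auto
  moreover have "inj_on (rank_station N Q) {..k}"
    using bij_betw_rank_station[of N Q] assms(1) by (auto simp: bij_betw_def intro: inj_on_subset)
  ultimately show ?thesis by (simp add: card_image)
qed

lemma card_above_le_rank:
  assumes "k < N" and "Q (rank_station N Q k) < t"
  shows "card {n. n < N \<and> t \<le> Q n} \<le> k"
proof -
  have "{n. n < N \<and> t \<le> Q n} \<subseteq> rank_station N Q ` {..<k}"
  proof
    fix n assume n: "n \<in> {n. n < N \<and> t \<le> Q n}"
    then obtain j where j: "j < N" "n = rank_station N Q j"
      using bij_betw_rank_station[of N Q] by (auto simp: bij_betw_def)
    have "j < k"
      using rank_station_antimono[of k j N Q] j n assms by (cases "j < k") auto
    then show "n \<in> rank_station N Q ` {..<k}" using j by auto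
  qed
  then have "card {n. n < N \<and> t \<le> Q n} \<le> card (rank_station N Q ` {..<k})"
    by (intro card_mono) auto
  also have "\<dots> \<le> k" using card_image_le[of "{..<k}" "rank_station N Q"] by simp
  finally show ?thesis .
qed

lemma sum_lessThan_fun_upd:
  fixes g :: "'a \<Rightarrow> 'b::comm_monoid_add" and Q :: "nat \<Rightarrow> 'a"
  assumes "i < N"
  shows "(\<Sum>n<N. g ((Q(i := v)) n)) + g (Q i) = (\<Sum>n<N. g (Q n)) + g v"
proof -
  have remove: "(\<Sum>n<N. h n) = h i + (\<Sum>n\<in>{..<N}-{i}. h n)" for h :: "nat \<Rightarrow> 'b"
    using assms by (intro sum.remove) auto
  have "(\<Sum>n\<in>{..<N}-{i}. g ((Q(i := v)) n)) = (\<Sum>n\<in>{..<N}-{i}. g (Q n))"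
    by (rule sum.cong) auto
  then show ?thesis using remove[of "\<lambda>n. g ((Q(i := v)) n)"] remove[of "\<lambda>n. g (Q n)"]
    by (simp add: ac_simps)
qed

lemma mass_above_arrival:
  "i < N \<Longrightarrow> mass_above N t (Q(i := Q i + 1)) = mass_above N t Q + (if t \<le> Q i then 1 else 0)"
  using sum_lessThan_fun_upd[of i N "\<lambda>x. x - t" Q "Q i + 1"] by (auto simp: mass_above_def)

lemma mass_above_departure:
  "i < N \<Longrightarrow> mass_above N t (Q(i := Q i - 1)) + (if t < Q i then 1 else 0) = mass_above N t Q"
  using sum_lessThan_fun_upd[of i N "\<lambda>x. x - t" Q "Q i - 1"] by (auto simp: mass_above_def)

lemma card_lessThan_eq_sum: "card {n. n < (N::nat) \<and> P n} = (\<Sum>n<N. if P n then 1 else 0)"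
proof -
  have "(\<Sum>n<N. if P n then 1 else 0) = card {x \<in> {..<N}. P x}"
    by (simp add: sum.inter_filter[symmetric])
  also have "{x \<in> {..<N}. P x} = {n. n < N \<and> P n}" by auto
  finally show ?thesis by simp
qed

lemma mass_above_Suc: "mass_above N t Q = mass_above N (Suc t) Q + card {n. n < N \<and> Suc t \<le> Q n}"
proof -
  have "mass_above N t Q = (\<Sum>n<N. (Q n - Suc t) + (if Suc t \<le> Q n then 1 else 0))"
    unfolding mass_above_def by (rule sum.cong) auto
  then show ?thesis by (simp add: sum.distrib mass_above_def card_lessThan_eq_sum)
qed

lemma Vvec_Suc_eq_mass_above:
  assumes "0 < N"
  shows "Vvec N Q (Suc t) = real (mass_above N t Q) / real N"
proof -
  define K where "K = (\<Sum>n<N. Q n)"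
  have QK: "n < N \<Longrightarrow> Q n \<le> K" for n
    unfolding K_def by (rule member_le_sum) auto
  have "Vvec N Q (Suc t) = (\<Sum>k<K. (1 / real N) * real (card {n. n < N \<and> Suc t + k \<le> Q n}))"
    unfolding Vvec_def
  proof (rule suminf_finite)
    fix k assume "k \<notin> {..<K}"
    then have "{n. n < N \<and> Suc t + k \<le> Q n} = {}" using QK by fastforce
    then show "1 / real N * real (card {n. n < N \<and> Suc t + k \<le> Q n}) = 0" by simp
  qed simp
  also have "\<dots> = (1 / real N) * real (\<Sum>k<K. card {n. n < N \<and> Suc t + k \<le> Q n})"
    by (simp add: sum_distrib_left)
  also have "(\<Sum>k<K. card {n. n < N \<and> Suc t + k \<le> Q n}) = (\<Sum>n<N. \<Sum>k<K. if Suc t + k \<le> Q n then 1 else 0)"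
    unfolding card_lessThan_eq_sum by (rule sum.swap)
  also have "\<dots> = mass_above N t Q"
    unfolding mass_above_def
  proof (rule sum.cong[OF refl])
    fix n assume "n \<in> {..<N}"
    then have "{k. k < K \<and> Suc t + k \<le> Q n} = {..<Q n - t}" using QK[of n] by auto
    then show "(\<Sum>k<K. if Suc t + k \<le> Q n then 1 else 0) = Q n - t"
      by (simp flip: card_lessThan_eq_sum)
  qed
  finally show ?thesis by simp
qed

definition mass_le :: "nat \<Rightarrow> qstate \<Rightarrow> qstate \<Rightarrow> bool" where
  "mass_le N a b \<longleftrightarrow> (\<forall>t. mass_above N t a \<le> mass_above N t b)"

lemma mass_le_arrival:
  assumes le: "mass_le N a b" and k: "k < N"
    and i: "i = rank_station N a k" and j: "j = rank_station N b k"
  shows "mass_le N (a(i := a i + 1)) (b(j := b j + 1))"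
  unfolding mass_le_def
proof
  fix t
  have a: "mass_above N t (a(i := a i + 1)) = mass_above N t a + (if t \<le> a i then 1 else 0)"
    and b: "mass_above N t (b(j := b j + 1)) = mass_above N t b + (if t \<le> b j then 1 else 0)"
    using i j k rank_station_lt by (blast intro: mass_above_arrival)+
  show "mass_above N t (a(i := a i + 1)) \<le> mass_above N t (b(j := b j + 1))"
  proof (cases "t \<le> a i \<and> \<not> t \<le> b j")
    case True
    then obtain t' where t: "t = Suc t'" by (cases t) auto
    have "Suc k \<le> card {n. n < N \<and> Suc t' \<le> a n}"
      using True t card_above_ge_rank[OF k, of t a] i by simp
    moreover have "card {n. n < N \<and> Suc t' \<le> b n} \<le> k"
      using True t card_above_le_rank[OF k, of b t] j by simp
    moreover have "mass_above N t' a \<le> mass_above N t' b" using le by (simp add: mass_le_def)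
    ultimately have "mass_above N (Suc t') a < mass_above N (Suc t') b"
      using mass_above_Suc[of N t' a] mass_above_Suc[of N t' b] by linarith
    then show ?thesis using a b t by simp
  next
    case False
    moreover have "mass_above N t a \<le> mass_above N t b" using le by (simp add: mass_le_def)
    ultimately show ?thesis using a b by auto
  qed
qed

lemma mass_le_departure:
  assumes le: "mass_le N a b" and k: "k < N"
    and i: "i = rank_station N a k" and j: "j = rank_station N b k"
  shows "mass_le N (a(i := a i - 1)) (b(j := b j - 1))"
  unfolding mass_le_def
proof
  fix t
  have a: "mass_above N t (a(i := a i - 1)) + (if t < a i then 1 else 0) = mass_above N t a"
    and b: "mass_above N t (b(j := b j - 1)) + (if t < b j then 1 else 0) = mass_above N t b"
    using i j k rank_station_lt by (blast intro: mass_above_departure)+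
  show "mass_above N t (a(i := a i - 1)) \<le> mass_above N t (b(j := b j - 1))"
  proof (cases "t < b j \<and> \<not> t < a i")
    case True
    have "card {n. n < N \<and> Suc t \<le> a n} \<le> k"
      using True card_above_le_rank[OF k, of a "Suc t"] i by simp
    moreover have "Suc k \<le> card {n. n < N \<and> Suc t \<le> b n}"
      using True card_above_ge_rank[OF k, of "Suc t" b] j by simp
    moreover have "mass_above N (Suc t) a \<le> mass_above N (Suc t) b" using le by (simp add: mass_le_def)
    ultimately have "mass_above N t a < mass_above N t b"
      using mass_above_Suc[of N t a] mass_above_Suc[of N t b] by linarith
    then show ?thesis using a b True by simp
  next
    case False
    moreover have "mass_above N t a \<le> mass_above N t b" using le by (simp add: mass_le_def)
    ultimately show ?thesis using a b by (auto split: if_splits)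
  qed
qed

text \<open>A departure from a longest queue of \<open>a\<close> lowers every nonzero tail mass of \<open>a\<close>, so it is
  dominated by a departure from any station of \<open>b\<close>.\<close>

lemma mass_le_longest_departure:
  assumes le: "mass_le N a b" and i: "i < N" and longest: "\<And>n. n < N \<Longrightarrow> a n \<le> a i" and j: "j < N"
  shows "mass_le N (a(i := a i - 1)) (b(j := b j - 1))"
  unfolding mass_le_def
proof
  fix t
  have a: "mass_above N t (a(i := a i - 1)) + (if t < a i then 1 else 0) = mass_above N t a"
    and b: "mass_above N t (b(j := b j - 1)) + (if t < b j then 1 else 0) = mass_above N t b"
    using i j by (blast intro: mass_above_departure)+
  show "mass_above N t (a(i := a i - 1)) \<le> mass_above N t (b(j := b j - 1))"
  proof (cases "t < a i")
    case True
    moreover have "mass_above N t a \<le> mass_above N t b" using le by (simp add: mass_le_def)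
    ultimately show ?thesis using a b by (auto split: if_splits)
  next
    case False
    then have "mass_above N t a = 0" unfolding mass_above_def using longest
      by (intro sum.neutral) (metis diff_is_0_eq le_trans lessThan_iff not_less)
    then show ?thesis using a by simp
  qed
qed

lemma mass_le_empty: "(\<And>i. i < N \<Longrightarrow> a i = 0) \<Longrightarrow> mass_le N a b"
  by (simp add: mass_le_def mass_above_def)

lemma mass_le_of_Vvec_eq:
  assumes "0 < N" and "Vvec N a = Vvec N b"
  shows "mass_le N a b"
  unfolding mass_le_def
proof
  fix t
  have "real (mass_above N t a) / real N = real (mass_above N t b) / real N"
    using assms by (simp flip: Vvec_Suc_eq_mass_above)
  then show "mass_above N t a \<le> mass_above N t b" using assms(1) by simp
qed

lemma Vvec_one_le:
  assumes "0 < N" and "mass_le N a b"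
  shows "Vvec N a 1 \<le> Vvec N b 1"
  using assms Vvec_Suc_eq_mass_above[OF assms(1), of _ 0]
  by (simp add: mass_le_def divide_right_mono)

section \<open>The coupled dynamics\<close>

text \<open>The noise must not depend on the state, so a uniform choice among the \<open>m + 1\<close> longest queues
  is read off the \<open>m\<close>-th entry of this list (the \<open>min\<close> in \<open>pick_longest\<close> only guards lists
  outside the support).\<close>

fun uniform_choices :: "nat \<Rightarrow> nat list pmf" where
  "uniform_choices 0 = return_pmf []"
| "uniform_choices (Suc m) = bind_pmf (uniform_choices m) (\<lambda>l. map_pmf (\<lambda>u. l @ [u]) (pmf_of_set {..<Suc m}))"

lemma length_uniform_choices: "l \<in> set_pmf (uniform_choices n) \<Longrightarrow> length l = n"
  by (induction n arbitrary: l) auto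

lemma map_pmf_nth_uniform_choices:
  "m < n \<Longrightarrow> map_pmf (\<lambda>r. r ! m) (uniform_choices n) = pmf_of_set {..<Suc m}"
proof (induction n)
  case (Suc n)
  have "map_pmf (\<lambda>r. r ! m) (uniform_choices (Suc n))
      = bind_pmf (uniform_choices n) (\<lambda>l. map_pmf (\<lambda>u. (l @ [u]) ! m) (pmf_of_set {..<Suc n}))"
    by (simp add: map_bind_pmf map_pmf_comp)
  also have "\<dots> = (if m < n then map_pmf (\<lambda>r. r ! m) (uniform_choices n) else pmf_of_set {..<Suc n})"
  proof (cases "m < n")
    case True
    have "bind_pmf (uniform_choices n) (\<lambda>l. map_pmf (\<lambda>u. (l @ [u]) ! m) (pmf_of_set {..<Suc n}))
        = bind_pmf (uniform_choices n) (\<lambda>l. return_pmf (l ! m))"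
      using True by (intro bind_pmf_cong) (auto simp: nth_append dest: length_uniform_choices)
    then show ?thesis using True by (simp add: map_pmf_def)
  next
    case False
    then have "m = n" using Suc.prems by simp
    then have "bind_pmf (uniform_choices n) (\<lambda>l. map_pmf (\<lambda>u. (l @ [u]) ! m) (pmf_of_set {..<Suc n}))
        = bind_pmf (uniform_choices n) (\<lambda>l. pmf_of_set {..<Suc n})"
      by (intro bind_pmf_cong) (auto simp: nth_append map_pmf_ident dest: length_uniform_choices)
    then show ?thesis using False by simp
  qed
  finally show ?case using Suc by (cases "m < n") (auto simp: less_Suc_eq)
qed simp

definition pick_longest :: "nat \<Rightarrow> qstate \<Rightarrow> nat list \<Rightarrow> nat" where
  "pick_longest N Q r =
     (let L = sorted_list_of_set (longest N Q); m = card (longest N Q) - 1 in L ! min (r ! m) m)"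

lemma longest_nonempty: "1 \<le> N \<Longrightarrow> longest N Q \<noteq> {}"
proof -
  assume "1 \<le> N"
  then have "Max (Q ` {..<N}) \<in> Q ` {..<N}" by (intro Max_in) (auto simp: lessThan_empty_iff)
  then show ?thesis unfolding longest_def by auto
qed

lemma finite_longest: "finite (longest N Q)"
  unfolding longest_def by auto

lemma pick_longest_in:
  assumes "1 \<le> N"
  shows "pick_longest N Q r \<in> longest N Q"
proof -
  have "card (longest N Q) > 0"
    using longest_nonempty[OF assms] finite_longest by (simp add: card_gt_0_iff)
  then have "min (r ! (card (longest N Q) - 1)) (card (longest N Q) - 1) < length (sorted_list_of_set (longest N Q))"
    by simp
  then show ?thesis
    unfolding pick_longest_def Let_def using finite_longest by (metis nth_mem set_sorted_list_of_set)
qed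

lemma pick_longest_is_longest:
  assumes "1 \<le> N"
  shows "pick_longest N Q r < N" and "\<And>n. n < N \<Longrightarrow> Q n \<le> Q (pick_longest N Q r)"
  using pick_longest_in[OF assms, of Q r] by (auto simp: longest_def)

lemma map_pmf_pick_longest:
  assumes "1 \<le> N"
  shows "map_pmf (pick_longest N Q) (uniform_choices N) = pmf_of_set (longest N Q)"
proof -
  let ?L = "longest N Q" let ?m = "card ?L" let ?s = "sorted_list_of_set ?L"
  have m: "1 \<le> ?m"
    using longest_nonempty[OF assms] finite_longest by (simp add: Suc_leI card_gt_0_iff)
  have "?m \<le> N"
    using card_mono[of "{..<N}" ?L] by (auto simp: longest_def)
  then have choice: "map_pmf (\<lambda>r. r ! (?m - 1)) (uniform_choices N) = pmf_of_set {..<?m}"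
    using map_pmf_nth_uniform_choices[of "?m - 1" N] m by simp
  have "map_pmf (pick_longest N Q) (uniform_choices N)
      = map_pmf (\<lambda>u. ?s ! min u (?m - 1)) (map_pmf (\<lambda>r. r ! (?m - 1)) (uniform_choices N))"
    by (simp add: map_pmf_comp pick_longest_def[abs_def] Let_def)
  also have "\<dots> = map_pmf (\<lambda>u. ?s ! min u (?m - 1)) (pmf_of_set {..<?m})"
    unfolding choice ..
  also have "\<dots> = map_pmf ((!) ?s) (pmf_of_set {..<?m})"
    using m by (intro map_pmf_cong) (auto simp: min_def lessThan_empty_iff)
  also have "\<dots> = pmf_of_set ((!) ?s ` {..<?m})"
    using m finite_longest
    by (intro map_pmf_of_set_inj inj_on_nth) (auto simp: lessThan_empty_iff)
  also have "(!) ?s ` {..<?m} = ?L"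
  proof -
    have "(!) ?s ` {..<length ?s} = set ?s" by (auto simp: set_conv_nth)
    then show ?thesis using finite_longest[of N Q] by simp
  qed
  finally show ?thesis .
qed

type_synonym noise = "bool \<times> bool \<times> nat \<times> nat list"

definition noise_pmf :: "nat \<Rightarrow> real \<Rightarrow> real \<Rightarrow> noise pmf" where
  "noise_pmf N lam p = pair_pmf (bernoulli_pmf (lam / (1 + lam)))
     (pair_pmf (bernoulli_pmf p) (pair_pmf (pmf_of_set {..<N}) (uniform_choices N)))"

definition central_departure :: "nat \<Rightarrow> qstate \<Rightarrow> nat list \<Rightarrow> qstate" where
  "central_departure N Q r =
     (if \<forall>i<N. Q i = 0 then Q else Q(pick_longest N Q r := Q (pick_longest N Q r) - 1))"

text \<open>Both systems use the same noise \<open>(arr, c, k, r)\<close>: arrivals and local departures hit the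
  station of rank \<open>k\<close> in each system (\<open>min\<close> only guards the null event \<open>k \<ge> N\<close>), and the bit \<open>c\<close>
  of a departure event is read only by the system with a central server.\<close>

definition next_state_p :: "nat \<Rightarrow> qstate \<Rightarrow> noise \<Rightarrow> qstate" where
  "next_state_p N Q x = (case x of (arr, c, k, r) \<Rightarrow>
     let i = rank_station N Q (min k (N - 1)) in
     if arr then Q(i := Q i + 1) else if c then central_departure N Q r else Q(i := Q i - 1))"

definition next_state_0 :: "nat \<Rightarrow> qstate \<Rightarrow> noise \<Rightarrow> qstate" where
  "next_state_0 N Q x = (case x of (arr, c, k, r) \<Rightarrow>
     let i = rank_station N Q (min k (N - 1)) in
     if arr then Q(i := Q i + 1) else Q(i := Q i - 1))"

lemma mass_le_next_state:
  assumes N: "1 \<le> N" and le: "mass_le N a b"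
  shows "mass_le N (next_state_p N a x) (next_state_0 N b x)"
proof -
  obtain arr c k r where x: "x = (arr, c, k, r)" by (cases x) auto
  define k' where "k' = min k (N - 1)"
  have k': "k' < N" using N by (simp add: k'_def)
  consider "arr" | "\<not> arr" "\<not> c" | "\<not> arr" "c" "\<forall>i<N. a i = 0" | "\<not> arr" "c" "\<not> (\<forall>i<N. a i = 0)"
    by blast
  then show ?thesis
  proof cases
    case 1
    then show ?thesis using mass_le_arrival[OF le k' refl refl]
      by (simp add: x next_state_p_def next_state_0_def k'_def Let_def)
  next
    case 2
    then show ?thesis using mass_le_departure[OF le k' refl refl]
      by (simp add: x next_state_p_def next_state_0_def k'_def Let_def)
  next
    case 3
    then show ?thesis using mass_le_empty[of N a]
      by (simp add: x next_state_p_def next_state_0_def central_departure_def Let_def)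
  next
    case 4
    have "central_departure N a r = a(pick_longest N a r := a (pick_longest N a r) - 1)"
      using 4(3) unfolding central_departure_def by (rule if_not_P)
    then show ?thesis
      using 4 mass_le_longest_departure[OF le pick_longest_is_longest[OF N] rank_station_lt[OF k']]
      by (simp add: x next_state_p_def next_state_0_def k'_def Let_def)
  qed
qed

lemma map_pmf_pair_pmf: "map_pmf f (pair_pmf A B) = bind_pmf A (\<lambda>a. map_pmf (\<lambda>b. f (a, b)) B)"
  unfolding pair_pmf_def map_bind_pmf by (simp add: map_pmf_def bind_assoc_pmf bind_return_pmf)

lemma map_pmf_rank_station:
  assumes "1 \<le> N"
  shows "map_pmf (\<lambda>k. h (rank_station N Q (min k (N - 1)))) (pmf_of_set {..<N}) = map_pmf h (pmf_of_set {..<N})"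
proof -
  have ne: "{..<N} \<noteq> {}" using assms by (auto simp: lessThan_empty_iff)
  have "map_pmf (\<lambda>k. rank_station N Q (min k (N - 1))) (pmf_of_set {..<N}) = map_pmf (rank_station N Q) (pmf_of_set {..<N})"
    using ne by (intro map_pmf_cong) auto
  also have "\<dots> = pmf_of_set {..<N}"
    using bij_betw_rank_station[of N Q] ne by (simp add: map_pmf_of_set_inj bij_betw_def)
  finally have uniform: "map_pmf (\<lambda>k. rank_station N Q (min k (N - 1))) (pmf_of_set {..<N}) = pmf_of_set {..<N}" .
  have "map_pmf (\<lambda>k. h (rank_station N Q (min k (N - 1)))) (pmf_of_set {..<N})
      = map_pmf h (map_pmf (\<lambda>k. rank_station N Q (min k (N - 1))) (pmf_of_set {..<N}))"
    by (simp add: map_pmf_comp)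
  also have "\<dots> = map_pmf h (pmf_of_set {..<N})" unfolding uniform ..
  finally show ?thesis .
qed

lemma map_pmf_central_departure:
  assumes "1 \<le> N"
  shows "map_pmf (central_departure N Q) (uniform_choices N) =
    (if \<forall>i<N. Q i = 0 then return_pmf Q else map_pmf (\<lambda>i. Q(i := Q i - 1)) (pmf_of_set (longest N Q)))"
proof (cases "\<forall>i<N. Q i = 0")
  case False
  then have "map_pmf (central_departure N Q) (uniform_choices N)
      = map_pmf (\<lambda>i. Q(i := Q i - 1)) (map_pmf (pick_longest N Q) (uniform_choices N))"
    unfolding central_departure_def if_not_P[OF False] by (simp add: map_pmf_comp)
  then show ?thesis unfolding if_not_P[OF False] by (simp add: map_pmf_pick_longest[OF assms])
qed (simp add: central_departure_def[abs_def])

lemma bernoulli_pmf_0: "bernoulli_pmf 0 = return_pmf False"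
  by (rule pmf_eqI) (simp split: split_indicator)

lemma map_pmf_next_state_p:
  assumes N: "1 \<le> N"
  shows "map_pmf (next_state_p N Q) (noise_pmf N lam p) = step N lam p Q"
proof -
  let ?U = "pmf_of_set {..<N}" and ?R = "uniform_choices N"
  let ?i = "\<lambda>k. rank_station N Q (min k (N - 1))"
  have arrival: "map_pmf (\<lambda>k. Q(?i k := Q (?i k) + 1)) ?U = map_pmf (\<lambda>i. Q(i := Q i + 1)) ?U"
    and departure: "map_pmf (\<lambda>k. Q(?i k := Q (?i k) - 1)) ?U = map_pmf (\<lambda>i. Q(i := Q i - 1)) ?U"
    by (rule map_pmf_rank_station[OF N])+
  have "map_pmf (\<lambda>y. next_state_p N Q (False, y)) (pair_pmf (bernoulli_pmf p) (pair_pmf ?U ?R))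
      = bernoulli_pmf p \<bind> (\<lambda>c. if c then map_pmf (central_departure N Q) ?R
                                 else map_pmf (\<lambda>k. Q(?i k := Q (?i k) - 1)) ?U)"
    unfolding map_pmf_pair_pmf
  proof (intro bind_pmf_cong refl)
    fix c :: bool
    show "?U \<bind> (\<lambda>k. map_pmf (\<lambda>r. next_state_p N Q (False, c, k, r)) ?R)
        = (if c then map_pmf (central_departure N Q) ?R else map_pmf (\<lambda>k. Q(?i k := Q (?i k) - 1)) ?U)"
      by (cases c) (simp_all add: next_state_p_def Let_def map_pmf_def)
  qed
  moreover have "map_pmf (\<lambda>y. next_state_p N Q (True, y)) (pair_pmf (bernoulli_pmf p) (pair_pmf ?U ?R))
      = map_pmf (\<lambda>k. Q(?i k := Q (?i k) + 1)) ?U"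
    unfolding map_pmf_pair_pmf by (simp add: next_state_p_def Let_def map_pmf_def)
  ultimately have "map_pmf (\<lambda>y. next_state_p N Q (arr, y)) (pair_pmf (bernoulli_pmf p) (pair_pmf ?U ?R))
      = (if arr then map_pmf (\<lambda>k. Q(?i k := Q (?i k) + 1)) ?U
         else bernoulli_pmf p \<bind> (\<lambda>c. if c then map_pmf (central_departure N Q) ?R
                                      else map_pmf (\<lambda>k. Q(?i k := Q (?i k) - 1)) ?U))" for arr
    by (cases arr) simp_all
  then show ?thesis
    unfolding noise_pmf_def step_def map_pmf_pair_pmf[of _ "bernoulli_pmf (lam / (1 + lam))"]
      arrival departure map_pmf_central_departure[OF N] by simp
qed

lemma map_pmf_next_state_0:
  assumes N: "1 \<le> N"
  shows "map_pmf (next_state_0 N Q) (noise_pmf N lam p) = step N lam 0 Q"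
proof -
  let ?U = "pmf_of_set {..<N}" and ?R = "uniform_choices N"
  let ?i = "\<lambda>k. rank_station N Q (min k (N - 1))"
  have arrival: "map_pmf (\<lambda>k. Q(?i k := Q (?i k) + 1)) ?U = map_pmf (\<lambda>i. Q(i := Q i + 1)) ?U"
    and departure: "map_pmf (\<lambda>k. Q(?i k := Q (?i k) - 1)) ?U = map_pmf (\<lambda>i. Q(i := Q i - 1)) ?U"
    by (rule map_pmf_rank_station[OF N])+
  have "map_pmf (\<lambda>y. next_state_0 N Q (arr, y)) (pair_pmf (bernoulli_pmf p) (pair_pmf ?U ?R))
      = (if arr then map_pmf (\<lambda>k. Q(?i k := Q (?i k) + 1)) ?U else map_pmf (\<lambda>k. Q(?i k := Q (?i k) - 1)) ?U)"
    for arr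
    unfolding map_pmf_pair_pmf by (cases arr) (simp_all add: next_state_0_def Let_def map_pmf_def)
  then show ?thesis
    unfolding noise_pmf_def step_def map_pmf_pair_pmf[of _ "bernoulli_pmf (lam / (1 + lam))"]
      arrival departure bernoulli_pmf_0 bind_return_pmf if_False by (simp only:)
qed

theorem lemma8:
  fixes lam p :: real and N :: nat and mu_p mu_0 :: "qstate pmf"
    and M :: "'a measure" and X :: "nat \<Rightarrow> 'a \<Rightarrow> qstate"
    and M' :: "'b measure" and Y :: "nat \<Rightarrow> 'b \<Rightarrow> qstate"
  assumes "0 \<le> lam" and "lam < 1" and "1 \<le> N" and "0 < p" and "p \<le> 1"
    and "markov_chain M X mu_p (step N lam p)"
    and "markov_chain M' Y mu_0 (step N lam 0)"
    and "map_pmf (Vvec N) mu_p = map_pmf (Vvec N) mu_0"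
  shows "stoch_dominated M (\<lambda>n \<omega>. Vvec N (X n \<omega>) 1) M' (\<lambda>n \<omega>. Vvec N (Y n \<omega>) 1)"
proof -
  note N = \<open>1 \<le> N\<close>
  obtain nu where nu_p: "map_pmf fst nu = mu_p" and nu_0: "map_pmf snd nu = mu_0"
    and Vvec_eq: "\<And>a b. (a, b) \<in> set_pmf nu \<Longrightarrow> Vvec N a = Vvec N b"
    using coupling_with_equal_image[OF assms(8)] by blast
  have X: "markov_chain M X (map_pmf fst nu) (step N lam p)"
    and Y: "markov_chain M' Y (map_pmf snd nu) (step N lam 0)"
    using assms(6,7) by (simp_all add: nu_p nu_0)
  show ?thesis
  proof (rule stoch_dominated_coupling[OF X Y map_pmf_next_state_p[OF N] map_pmf_next_state_0[OF N]])
    show "mass_le N a b" if "(a, b) \<in> set_pmf nu" for a b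
      using N that by (intro mass_le_of_Vvec_eq Vvec_eq) auto
    show "mass_le N (next_state_p N a x) (next_state_0 N b x)" if "mass_le N a b" for a b x
      using N that by (rule mass_le_next_state)
    show "Vvec N a 1 \<le> Vvec N b 1" if "mass_le N a b" for a b
      using N that by (intro Vvec_one_le) auto
  qed
qed

end
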